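(* There exist constants $c>0$ and $\kappa>0$ such that for all integers $n\ge 2$ and $\ell$ with $1\le \ell\le n$: (i) if $\ell> c\log^5 n$, then $\varphi(n,\ell)\ge \kappa\,\frac{\ell}{n}\,\varphi(n)$; (ii) if $\ell> c\log n$, then $\varphi(n,\ell)\ge \kappa\,\frac{\ell}{\log \ell}$.
   Context: $\mathbb{Z}_m^*=\{x\in\{0,\dots,m-1\}:\gcd(x,m)=1\}$; $\varphi(m)=|\mathbb{Z}_m^*|$ is Euler's totient function and the relative totient function is $\varphi(m,k)=|\{x\in\mathbb{Z}_m^*: x\le k\}|$. Convention: $\log x$ denotes $\max(\ln x,1)$. *)

theory Defs
  imports "HOL-Number_Theory.Number_Theory"
begin

definition rel_totient :: "nat \<Rightarrow> nat \<Rightarrow> nat" where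
  "rel_totient m k = card {x \<in> {0..<m}. coprime x m \<and> x \<le> k}"

text \<open>Convention: log x means max(ln x, 1).\<close>
definition mlog :: "real \<Rightarrow> real" where
  "mlog x = max (ln x) 1"

end

theory Submission
  imports Defs "HOL-Analysis.Harmonic_Numbers" "HOL-Real_Asymp.Real_Asymp"
begin

text \<open>
  For \<open>a \<le> B\<close> coprime to \<open>n\<close> and primes \<open>q\<close> in \<open>(B, l/a]\<close> not dividing \<open>n\<close>,
  the products \<open>a q\<close> are pairwise distinct units of \<open>\<int>\<^sub>n\<close> below \<open>l\<close>.
  Chebyshev's bound \<open>\<pi>(Y) \<ge> (ln 2 / 4) Y / ln Y\<close>, minus the at most \<open>B + ln n / ln B\<close> primes
  that are \<open>\<le> B\<close> or divide \<open>n\<close>, leaves a constant times \<open>l / (a ln l)\<close> choices of \<open>q\<close>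
  for each \<open>a\<close>, while \<open>\<Sum>\<^bsub>a \<le> B, (a,n)=1\<^esub> 1/a \<ge> (\<phi>(n)/n) ln (B + 1)\<close> by an Euler product
  argument. Taking \<open>B = l\<^sup>1\<^sup>/\<^sup>3\<close> and \<open>ln n \<le> l\<^sup>1\<^sup>/\<^sup>5\<close> gives (i); taking only \<open>a = 1\<close>,
  \<open>B = \<surd>l\<close> and \<open>ln n \<le> (ln 2 / 64) l\<close> gives (ii).
\<close>

subsection \<open>Chebyshev's lower bound for the prime counting function\<close>

lemma multiplicity_fact_nat:
  fixes p :: nat
  assumes p: "prime p" and "n \<le> N"
  shows "multiplicity p (fact n) = (\<Sum>k\<in>{1..N}. n div p ^ k)"
  using \<open>n \<le> N\<close>
proof (induction n)
  case 0
  then show ?case by simp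
next
  case (Suc n)
  have p2: "p \<ge> 2" using p prime_ge_2_nat by blast
  have "multiplicity p (fact (Suc n) :: nat) = multiplicity p (Suc n * fact n)"
    by (simp add: fact_Suc)
  also have "\<dots> = multiplicity p (Suc n) + multiplicity p (fact n :: nat)"
    using p by (intro prime_elem_multiplicity_mult_distrib) auto
  also have "multiplicity p (fact n :: nat) = (\<Sum>k\<in>{1..N}. n div p ^ k)"
    using Suc by simp
  also have "multiplicity p (Suc n) = card {k\<in>{1..N}. p ^ k dvd Suc n}"
  proof -
    have "p ^ multiplicity p (Suc n) \<le> Suc n"
      by (intro dvd_imp_le multiplicity_dvd) auto
    moreover have "2 ^ multiplicity p (Suc n) \<le> p ^ multiplicity p (Suc n)"
      using p2 by (simp add: power_mono)
    moreover have "multiplicity p (Suc n) < 2 ^ multiplicity p (Suc n)" by (rule less_exp)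
    ultimately have "multiplicity p (Suc n) \<le> N" using Suc.prems by linarith
    moreover have "p ^ k dvd Suc n \<longleftrightarrow> k \<le> multiplicity p (Suc n)" for k
      using power_dvd_iff_le_multiplicity[of "Suc n" p k] prime_gt_1_nat[OF p] by auto
    ultimately have "{k\<in>{1..N}. p ^ k dvd Suc n} = {1..multiplicity p (Suc n)}"
      by (simp only: atLeastAtMost_iff) fastforce
    thus ?thesis by simp
  qed
  also have "card {k\<in>{1..N}. p ^ k dvd Suc n} = (\<Sum>k\<in>{1..N}. if p ^ k dvd Suc n then 1 else 0)"
    using sum.inter_filter[of "{1..N}" "\<lambda>_. 1::nat" "\<lambda>k. p^k dvd Suc n"] by simp
  also have "\<dots> + (\<Sum>k\<in>{1..N}. n div p ^ k) = (\<Sum>k\<in>{1..N}. Suc n div p ^ k)"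
    by (subst sum.distrib[symmetric], intro sum.cong refl) (auto simp: div_Suc dvd_eq_mod_eq_0)
  finally show ?case .
qed

lemma double_div_bounds:
  fixes m q :: nat
  shows "2 * (m div q) \<le> (2 * m) div q \<and> (2 * m) div q \<le> 2 * (m div q) + 1"
proof (cases "q = 0")
  case False
  obtain a r where m: "m = q * a + r" "r < q"
    using False by (metis div_mult_mod_eq mod_less_divisor neq0_conv mult.commute)
  have "2 * m = 2 * r + (2 * a) * q" using m by simp
  then have "(2 * m) div q = 2 * a + (2 * r) div q" using False by simp
  moreover have "(2 * r) div q < 2"
    using m False by (simp add: div_less_iff_less_mult mult.commute)
  ultimately show ?thesis using m by simp
qed simp

text \<open>Each prime power exactly dividing \<open>(2m choose m)\<close> is at most \<open>2m\<close>: by Legendre's formula its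
  exponent is a sum of terms \<open>\<lfloor>2m/p\<^sup>k\<rfloor> - 2\<lfloor>m/p\<^sup>k\<rfloor> \<in> {0,1}\<close> that vanish once \<open>p\<^sup>k > 2m\<close>.\<close>

lemma prime_power_multiplicity_central_binomial_le:
  fixes p m :: nat
  assumes p: "prime p" and m: "m \<ge> 1"
  shows "p ^ multiplicity p ((2 * m) choose m) \<le> 2 * m"
proof (rule ccontr)
  define e where "e = multiplicity p ((2 * m) choose m)"
  assume "\<not> ?thesis"
  hence big: "p ^ e > 2 * m" by (simp add: e_def)
  have p2: "p \<ge> 2" using p prime_ge_2_nat by blast
  have "fact (2 * m) = (fact m * fact m * ((2 * m) choose m) :: nat)"
    using binomial_fact_lemma[of m "2 * m"] by (simp add: mult_2 algebra_simps)
  hence "multiplicity p (fact (2 * m) :: nat) = 2 * multiplicity p (fact m :: nat) + e"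
    using p by (simp add: prime_elem_multiplicity_mult_distrib e_def)
  hence "(\<Sum>k\<in>{1..2*m}. (2 * m) div p ^ k) = 2 * (\<Sum>k\<in>{1..2*m}. m div p ^ k) + e"
    using multiplicity_fact_nat[OF p, of "2 * m" "2 * m"] multiplicity_fact_nat[OF p, of m "2 * m"]
    by simp
  hence "e = (\<Sum>k\<in>{1..2*m}. (2 * m) div p ^ k - 2 * (m div p ^ k))"
    using double_div_bounds by (subst sum_subtractf_nat) (auto simp: sum_distrib_left)
  also have "\<dots> \<le> (\<Sum>k\<in>{1..2*m}. if k < e then 1 else 0)"
  proof (intro sum_mono)
    fix k assume "k \<in> {1..2 * m}"
    show "(2 * m) div p ^ k - 2 * (m div p ^ k) \<le> (if k < e then 1 else 0)"
    proof (cases "k < e")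
      case True
      thus ?thesis using double_div_bounds[of m "p ^ k"] by auto
    next
      case False
      hence "p ^ e \<le> p ^ k" using p2 by (intro power_increasing) auto
      thus ?thesis using big by simp
    qed
  qed
  also have "\<dots> = card {k\<in>{1..2*m}. k < e}"
    using sum.inter_filter[of "{1..2*m}" "\<lambda>_. 1::nat" "\<lambda>k. k < e"] by simp
  also have "\<dots> \<le> card {1..<e}" by (intro card_mono) auto
  finally have "e = 0" by simp
  thus False using big m by simp
qed

lemma central_binomial_le_power_prime_count:
  fixes m :: nat
  assumes m: "m \<ge> 1"
  shows "(2 * m) choose m \<le> (2 * m) ^ card {p\<in>{..2*m}. prime p}"
proof -
  define C where "C = (2 * m) choose m"
  have "C = (\<Prod>p\<in>prime_factors C. p ^ multiplicity p C)"
    by (rule prime_factorization_nat) (simp add: C_def)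
  also have "\<dots> \<le> (\<Prod>p\<in>prime_factors C. 2 * m)"
    by (intro prod_mono) (auto simp: C_def intro!: prime_power_multiplicity_central_binomial_le m)
  also have "\<dots> = (2 * m) ^ card (prime_factors C)" by simp
  also have "\<dots> \<le> (2 * m) ^ card {p\<in>{..2*m}. prime p}"
  proof (intro power_increasing card_mono)
    show "prime_factors C \<subseteq> {p\<in>{..2*m}. prime p}"
    proof
      fix p assume p: "p \<in> prime_factors C"
      hence "prime p" by auto
      have "p ^ 1 \<le> p ^ multiplicity p C"
        using p prime_gt_0_nat[OF \<open>prime p\<close>]
        by (intro power_increasing) (auto simp: prime_factors_multiplicity Suc_le_eq)
      also have "\<dots> \<le> 2 * m"
        unfolding C_def using \<open>prime p\<close> m by (rule prime_power_multiplicity_central_binomial_le)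
      finally show "p \<in> {p\<in>{..2*m}. prime p}" using \<open>prime p\<close> by auto
    qed
  qed (use m in auto)
  finally show ?thesis by (simp add: C_def)
qed

lemma prime_count_lower_bound:
  fixes N :: nat
  assumes N: "N \<ge> 2"
  shows "real (card {p\<in>{..N}. prime p}) \<ge> ln 2 / 4 * N / ln N"
proof -
  define m where "m = N div 2"
  define P where "P = card {p\<in>{..N}. prime p}"
  have m1: "m \<ge> 1" and mN: "2 * m \<le> N" and m4: "real N \<le> 4 * m"
    using N unfolding m_def by linarith+
  have "card {p\<in>{..2*m}. prime p} \<le> P"
    unfolding P_def using mN by (intro card_mono) auto
  have "2 * real m \<le> 2 ^ m"
    using m1 by (induction m rule: dec_induct) auto
  hence "(2::real) ^ m * (2 * real m) \<le> 2 ^ m * 2 ^ m"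
    by (intro mult_left_mono) auto
  hence "(2::real) ^ m \<le> 4 ^ m / (2 * real m)"
    using m1 by (simp add: field_simps flip: power_mult_distrib)
  also have "\<dots> \<le> real ((2 * m) choose m)"
    using m1 by (intro central_binomial_lower_bound) auto
  also have "\<dots> \<le> real (2 * m) ^ card {p\<in>{..2*m}. prime p}"
    using central_binomial_le_power_prime_count[OF m1] by (metis of_nat_le_iff of_nat_power)
  also have "\<dots> \<le> real N ^ P"
    using mN N \<open>card {p\<in>{..2*m}. prime p} \<le> P\<close>
    by (intro order.trans[OF power_mono power_increasing]) auto
  finally have "ln (2 ^ m) \<le> ln (real N ^ P)"
    using N by (subst ln_le_cancel_iff) auto
  hence "m * ln 2 \<le> P * ln N" using N by (simp add: ln_realpow)
  moreover have "N * ln 2 \<le> (4 * m) * ln 2" using m4 by (intro mult_right_mono) auto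
  ultimately have "N * ln 2 \<le> 4 * (P * ln N)" by linarith
  thus ?thesis unfolding P_def using N by (simp add: field_simps)
qed

subsection \<open>Primes avoiding the divisors of \<open>n\<close>\<close>

definition coprime_primes_between :: "nat \<Rightarrow> nat \<Rightarrow> nat \<Rightarrow> nat set" where
  "coprime_primes_between n B Y = {q. prime q \<and> B < q \<and> q \<le> Y \<and> \<not> q dvd n}"

lemma card_large_prime_factors_le:
  fixes n B :: nat
  assumes n: "n > 0" and B: "B \<ge> 2"
  shows "real (card {p\<in>prime_factors n. B < p}) * ln B \<le> ln n"
proof -
  define S where "S = {p\<in>prime_factors n. B < p}"
  have S: "S \<subseteq> prime_factors n" by (auto simp: S_def)
  have pos: "p \<ge> 1" if "p \<in> prime_factors n" for p
    using that by (auto simp: in_prime_factors_iff Suc_le_eq prime_gt_0_nat)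
  have "B ^ card S = (\<Prod>p\<in>S. B)" by simp
  also have "\<dots> \<le> (\<Prod>p\<in>S. p)" by (intro prod_mono) (auto simp: S_def)
  also have "\<dots> \<le> (\<Prod>p\<in>S. p) * (\<Prod>p\<in>prime_factors n - S. p)"
    using mult_le_mono2[OF prod_ge_1, of "prime_factors n - S" "\<lambda>p. p" "\<Prod>p\<in>S. p"] pos
    by simp
  also have "\<dots> = (\<Prod>p\<in>prime_factors n. p)"
    using prod.subset_diff[OF S, of "\<lambda>p. p"] by simp
  also have "\<dots> \<le> (\<Prod>p\<in>prime_factors n. p ^ multiplicity p n)"
    using pos by (intro prod_mono) (auto intro!: self_le_power simp: prime_factors_multiplicity)
  also have "\<dots> = n" using n by (rule prime_factorization_nat[symmetric])
  finally have "real B ^ card S \<le> real n" by (metis of_nat_le_iff of_nat_power)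
  hence "ln (real B ^ card S) \<le> ln (real n)" using B n by (subst ln_le_cancel_iff) auto
  thus ?thesis using B by (simp add: ln_realpow S_def)
qed

lemma card_coprime_primes_between_ge:
  fixes n B Y :: nat
  assumes n: "n > 0" and B: "B \<ge> 2" and Y: "Y \<ge> 2"
  shows "real (card (coprime_primes_between n B Y)) \<ge> ln 2 / 4 * Y / ln Y - B - ln n / ln B"
proof -
  define G where "G = coprime_primes_between n B Y"
  define S where "S = {p\<in>prime_factors n. B < p}"
  have "{p\<in>{..Y}. prime p} \<subseteq> G \<union> {1..B} \<union> S"
    using n by (auto simp: G_def S_def coprime_primes_between_def in_prime_factors_iff
        dest: prime_gt_0_nat)
  hence "card {p\<in>{..Y}. prime p} \<le> card (G \<union> {1..B} \<union> S)"
    by (intro card_mono) (auto simp: G_def S_def coprime_primes_between_def)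
  also have "\<dots> \<le> card G + card {1..B} + card S"
    by (metis card_Un_le add_le_mono le_trans order_refl)
  finally have "real (card {p\<in>{..Y}. prime p}) \<le> card G + B + card S" by simp
  moreover have "real (card S) \<le> ln n / ln B"
    using card_large_prime_factors_le[OF n B] B by (simp add: S_def field_simps)
  ultimately show ?thesis
    using prime_count_lower_bound[OF Y] unfolding G_def by linarith
qed

subsection \<open>Harmonic sums over integers coprime to \<open>n\<close>\<close>

definition sifted_harmonic :: "nat set \<Rightarrow> nat \<Rightarrow> real" where
  "sifted_harmonic F X = (\<Sum>a\<in>{a\<in>{1..X}. \<forall>p\<in>F. \<not> p dvd a}. 1 / real a)"

lemma geometric_sum_inverse_le:
  fixes p :: real
  assumes "p > 1"
  shows "(\<Sum>k\<le>X. (1 / p) ^ k) \<le> p / (p - 1)"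
proof -
  have "(\<Sum>k\<le>X. (1 / p) ^ k) = ((1 / p) ^ Suc X - 1) / (1 / p - 1)"
    using assms by (subst lessThan_Suc_atMost [symmetric], intro geometric_sum) auto
  also have "\<dots> = (1 - (1 / p) ^ Suc X) / (1 - 1 / p)"
    by (metis minus_diff_eq minus_divide_divide)
  also have "\<dots> \<le> 1 / (1 - 1 / p)"
    using assms by (intro divide_right_mono) (auto simp: field_simps)
  also have "\<dots> = p / (p - 1)" using assms by (simp add: field_simps)
  finally show ?thesis .
qed

text \<open>Writing \<open>a = p\<^sup>k b\<close> with \<open>p \<not> dvd b\<close> injects the terms of the left sum into the expansion of
  \<open>(\<Sum>\<^bsub>k\<le>X\<^esub> p\<^sup>-\<^sup>k) \<cdot> sifted_harmonic (insert p F) X\<close>.\<close>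

lemma sifted_harmonic_le_insert:
  fixes p :: nat
  assumes p: "prime p"
  shows "sifted_harmonic F X \<le> (\<Sum>k\<le>X. (1 / real p) ^ k) * sifted_harmonic (insert p F) X"
proof -
  define A where "A = {a\<in>{1..X}. \<forall>q\<in>F. \<not> q dvd a}"
  define A' where "A' = {a\<in>{1..X}. \<forall>q\<in>insert p F. \<not> q dvd a}"
  define g where "g = (\<lambda>a::nat. (multiplicity p a, a div p ^ multiplicity p a))"
  define h where "h = (\<lambda>(k::nat, b::nat). (1 / real p) ^ k * (1 / real b))"
  have p2: "p \<ge> 2" using p prime_ge_2_nat by blast
  have dec: "a = p ^ multiplicity p a * (a div p ^ multiplicity p a)" for a
    using multiplicity_dvd[of p a] by simp
  have gA: "g ` A \<subseteq> {..X} \<times> A'"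
  proof (rule image_subsetI)
    fix a assume a: "a \<in> A"
    define k where "k = multiplicity p a"
    define b where "b = a div p ^ k"
    have a1: "a \<ge> 1" "a \<le> X" using a by (auto simp: A_def)
    have ab: "a = p ^ k * b" using dec[of a] by (simp add: k_def b_def)
    have b1: "b \<ge> 1" using ab a1 by (cases b) auto
    have "k < 2 ^ k" by (rule less_exp)
    also have "2 ^ k \<le> p ^ k" using p2 by (simp add: power_mono)
    also have "p ^ k \<le> a" using ab b1 by simp
    finally have "k \<le> X" using a1 by linarith
    moreover have "b \<le> X" unfolding b_def using a1 div_le_dividend le_trans by blast
    moreover have "\<not> p dvd b"
      unfolding b_def k_def using a1 p2 by (intro multiplicity_decompose) auto
    moreover have "\<not> q dvd b" if "q \<in> F" for q
      using a that ab by (auto simp: A_def)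
    ultimately show "g a \<in> {..X} \<times> A'" using b1 a1 by (auto simp: A'_def g_def k_def b_def)
  qed
  have "inj_on g A"
    by (rule inj_onI) (metis dec g_def prod.inject)
  moreover have "1 / real a = h (g a)" for a
    by (subst (1) dec[of a]) (simp add: h_def g_def power_one_over)
  ultimately have "sifted_harmonic F X = (\<Sum>y\<in>g ` A. h y)"
    unfolding sifted_harmonic_def A_def[symmetric] by (simp add: sum.reindex)
  also have "\<dots> \<le> (\<Sum>y\<in>{..X} \<times> A'. h y)"
    by (intro sum_mono2 gA) (auto simp: h_def A'_def)
  also have "\<dots> = (\<Sum>k\<le>X. (1 / real p) ^ k) * sifted_harmonic (insert p F) X"
    by (simp add: h_def sum_product sum.cartesian_product sifted_harmonic_def A'_def)
  finally show ?thesis .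
qed

lemma sifted_harmonic_ge:
  assumes "finite F" "\<forall>p\<in>F. prime p"
  shows "sifted_harmonic F X \<ge> (\<Prod>p\<in>F. 1 - 1 / real p) * ln (real X + 1)"
  using assms
proof (induction F rule: finite_induct)
  case empty
  have "{a\<in>{1..X}. \<forall>p\<in>{}. \<not> p dvd a} = {1..X}" by auto
  then show ?case using ln_le_harm[of X] by (simp add: sifted_harmonic_def harm_def field_simps)
next
  case (insert p F)
  have p: "prime p" and p2: "real p \<ge> 2" using insert prime_ge_2_nat by auto
  have "(\<Sum>k\<le>X. (1 / real p) ^ k) * sifted_harmonic (insert p F) X
          \<le> real p / (real p - 1) * sifted_harmonic (insert p F) X"
    using p2 by (intro mult_right_mono geometric_sum_inverse_le)
      (auto simp: sifted_harmonic_def intro!: sum_nonneg)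
  with sifted_harmonic_le_insert[OF p, of F X]
  have step: "sifted_harmonic F X \<le> real p / (real p - 1) * sifted_harmonic (insert p F) X"
    by linarith
  have "(\<Prod>p\<in>insert p F. 1 - 1 / real p) * ln (real X + 1)
        \<le> (1 - 1 / real p) * sifted_harmonic F X"
    using insert p2 by (simp add: mult.assoc mult_left_mono)
  also have "\<dots> \<le> (1 - 1 / real p) * (real p / (real p - 1) * sifted_harmonic (insert p F) X)"
    using step p2 by (intro mult_left_mono) auto
  also have "\<dots> = sifted_harmonic (insert p F) X" using p2 by (simp add: field_simps)
  finally show ?case .
qed

lemma coprime_iff_no_prime_factor_dvd:
  fixes a n :: nat
  assumes n: "n > 0"
  shows "coprime a n \<longleftrightarrow> (\<forall>p\<in>prime_factors n. \<not> p dvd a)"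
proof
  assume "coprime a n"
  show "\<forall>p\<in>prime_factors n. \<not> p dvd a"
  proof (intro ballI notI)
    fix p assume "p \<in> prime_factors n" "p dvd a"
    hence "prime p" "p dvd n" "p dvd a" by (auto simp: in_prime_factors_iff)
    thus False using \<open>coprime a n\<close> coprime_common_divisor not_prime_unit by blast
  qed
next
  assume none: "\<forall>p\<in>prime_factors n. \<not> p dvd a"
  show "coprime a n"
  proof (rule coprimeI)
    fix c assume "c dvd a" "c dvd n"
    show "is_unit c"
    proof (rule ccontr)
      assume "\<not> is_unit c"
      then obtain p where "prime p" "p dvd c" using prime_factor_nat by auto
      hence "p \<in> prime_factors n" "p dvd a"
        using n \<open>c dvd a\<close> \<open>c dvd n\<close> by (auto simp: in_prime_factors_iff intro: dvd_trans)
      thus False using none by blast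
    qed
  qed
qed

lemma harmonic_coprime_ge:
  fixes n X :: nat
  assumes n: "n > 0"
  shows "(\<Sum>a\<in>{a\<in>{1..X}. coprime a n}. 1 / real a) \<ge> real (totient n) / real n * ln (real X + 1)"
proof -
  have "real (totient n) / real n * ln (real X + 1) \<le> sifted_harmonic (prime_factors n) X"
    using n by (subst totient_formula2) (auto intro: sifted_harmonic_ge)
  thus ?thesis
    unfolding sifted_harmonic_def using coprime_iff_no_prime_factor_dvd[OF n] by simp
qed

subsection \<open>Products of small units and large primes\<close>

lemma mult_large_prime_eq_imp_eq:
  fixes a a' q q' B :: nat
  assumes "prime q" "prime q'" "1 \<le> a" "a \<le> B" "B < q" "1 \<le> a'" "a' \<le> B" "B < q'"
    and eq: "a * q = a' * q'"
  shows "a = a' \<and> q = q'"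
proof -
  have "\<not> q dvd a'" using assms by (auto dest: dvd_imp_le)
  moreover have "q dvd a' * q'" using eq by (metis dvd_triv_right)
  ultimately have "q dvd q'" using \<open>prime q\<close> by (simp add: prime_dvd_mult_iff)
  hence "q = q'" using assms(1,2) by (simp add: primes_dvd_imp_eq)
  thus ?thesis using eq \<open>prime q\<close> prime_gt_0_nat by auto
qed

lemma sum_card_coprime_primes_between_le_rel_totient:
  fixes n l B :: nat
  assumes n: "n \<ge> 2" and l: "l \<le> n"
  shows "(\<Sum>a\<in>{a\<in>{1..B}. coprime a n}. card (coprime_primes_between n B (l div a)))
           \<le> rel_totient n l"
proof -
  define A where "A = {a\<in>{1..B}. coprime a n}"
  define Q where "Q = (\<lambda>a. coprime_primes_between n B (l div a))"
  have finQ: "finite (Q a)" for a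
    by (rule finite_subset[of _ "{..l}"])
       (auto simp: Q_def coprime_primes_between_def intro: le_trans div_le_dividend)
  have "(\<Sum>a\<in>A. card (Q a)) = (\<Sum>a\<in>A. card ((*) a ` Q a))"
    by (intro sum.cong refl card_image [symmetric]) (auto simp: A_def inj_on_def)
  also have "\<dots> = card (\<Union>a\<in>A. (*) a ` Q a)"
  proof (rule card_UN_disjoint [symmetric])
    show "\<forall>i\<in>A. \<forall>j\<in>A. i \<noteq> j \<longrightarrow> (*) i ` Q i \<inter> (*) j ` Q j = {}"
      using mult_large_prime_eq_imp_eq by (fastforce simp: A_def Q_def coprime_primes_between_def)
  qed (use finQ in \<open>auto simp: A_def\<close>)
  also have "\<dots> \<le> rel_totient n l"
    unfolding rel_totient_def
  proof (intro card_mono subsetI)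
    fix y assume "y \<in> (\<Union>a\<in>A. (*) a ` Q a)"
    then obtain a q where a: "a \<in> A" and q: "q \<in> Q a" and y: "y = a * q" by auto
    have "a * q \<le> a * (l div a)" using q by (simp add: Q_def coprime_primes_between_def)
    also have "\<dots> \<le> l" by simp
    finally have "y \<le> l" using y by simp
    moreover have "coprime y n"
      using a q y by (simp add: A_def Q_def coprime_primes_between_def prime_imp_coprime)
    moreover have "y \<noteq> n" using \<open>coprime y n\<close> n by auto
    ultimately show "y \<in> {x\<in>{0..<n}. coprime x n \<and> x \<le> l}" using l by auto
  qed simp
  finally show ?thesis by (simp add: A_def Q_def)
qed

lemma mlog_ge_one: "mlog t \<ge> 1"
  and ln_le_mlog: "ln t \<le> mlog t"
  by (auto simp: mlog_def)

lemma power_le_imp_le_powr_inverse: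
  fixes a b :: real
  assumes "0 \<le> a" "a ^ k \<le> b" "k > 0"
  shows "a \<le> b powr (1 / real k)"
proof -
  have "(a ^ k) powr (1 / real k) = a"
    using assms by (cases "a = 0") (simp_all add: powr_realpow [symmetric] powr_powr)
  thus ?thesis using powr_mono2[of "1 / real k" "a ^ k" b] assms by simp
qed

lemma real_div_nat_ge:
  fixes l a :: nat
  assumes a: "0 < a" and "2 * a \<le> l"
  shows "real l / (2 * real a) \<le> real (l div a)"
proof -
  have q: "l div a \<ge> 1"
    using assms by (simp add: Suc_le_eq div_greater_zero_iff)
  have "real l < real a + real a * real (l div a)"
    using dividend_less_times_div[OF a, of l] by (metis of_nat_add of_nat_less_iff of_nat_mult)
  also have "\<dots> \<le> real a * (2 * real (l div a))"
    using mult_left_mono[of 1 "real (l div a)" "real a"] q by (simp add: algebra_simps)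
  finally show ?thesis using a by (simp add: field_simps)
qed

lemma nat_floor_bounds:
  fixes t :: real
  assumes "0 \<le> t"
  shows "real (nat \<lfloor>t\<rfloor>) \<le> t" and "t - 1 \<le> real (nat \<lfloor>t\<rfloor>)"
  using assms by linarith+

lemma card_coprime_primes_between_quotient_ge:
  fixes n l a :: nat
  defines "x \<equiv> real l" and "u \<equiv> real l powr (1/3)"
  assumes n: "n > 0" and a: "1 \<le> a" "real a \<le> u"
    and u3: "u \<ge> 3" and x4: "x powr (2/3) \<ge> 4" and lnx: "ln x \<ge> 1"
    and small: "u + x powr (1/5) / ln (u - 1) \<le> ln 2 / 16 * x powr (2/3) / ln x"
    and lnn: "ln (real n) \<le> x powr (1/5)"
  shows "real (card (coprime_primes_between n (nat \<lfloor>u\<rfloor>) (l div a)))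
           \<ge> ln 2 / 16 * x / ln x / real a"
proof -
  define B where "B = nat \<lfloor>u\<rfloor>"
  define Y where "Y = l div a"
  have xpos: "x > 0" using lnx unfolding x_def by (cases l) auto
  have B: "real B \<le> u" "u - 1 \<le> real B"
    unfolding B_def u_def by (intro nat_floor_bounds; simp)+
  have B2: "B \<ge> 2" using B u3 by linarith
  have xa: "x powr (2/3) \<le> x / real a"
  proof -
    have "x powr (2/3) * u = x" unfolding u_def x_def using xpos
      by (simp add: powr_add [symmetric] x_def)
    hence "x powr (2/3) = x / u" using u3 by (simp add: field_simps)
    also have "\<dots> \<le> x / real a" using a xpos by (intro divide_left_mono) auto
    finally show ?thesis .
  qed
  have "real a * 4 \<le> real a * x powr (2/3)" using x4 by (intro mult_left_mono) auto
  moreover have "real a * x powr (2/3) \<le> x" using xa a by (simp add: field_simps)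
  ultimately have "2 * real a \<le> x" by linarith
  hence Y: "x / (2 * real a) \<le> real Y" unfolding Y_def x_def
    using a by (intro real_div_nat_ge) linarith+
  moreover have "x powr (2/3) / 2 \<le> x / (2 * real a)" using xa by simp
  ultimately have Y2: "Y \<ge> 2" using x4 by linarith
  have lnY: "0 < ln (real Y)" "ln (real Y) \<le> ln x"
    using Y2 xpos by (auto simp: Y_def x_def)
  have "x / (2 * real a) / ln x \<le> Y / ln Y"
    using Y lnY by (intro frac_le) auto
  hence "ln 2 / 4 * (x / (2 * real a) / ln x) \<le> ln 2 / 4 * (Y / ln Y)"
    by (intro mult_left_mono) auto
  hence "ln 2 / 8 * x / ln x / real a \<le> ln 2 / 4 * Y / ln Y"
    by (simp add: mult.commute)
  moreover have "real B + ln n / ln B \<le> u + x powr (1/5) / ln (u - 1)"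
  proof -
    have "ln (u - 1) > 0" "ln (u - 1) \<le> ln B" using B u3 by auto
    hence "ln n / ln B \<le> x powr (1/5) / ln (u - 1)"
      using lnn n by (intro frac_le) auto
    thus ?thesis using B by linarith
  qed
  moreover have "ln 2 / 16 * x powr (2/3) / ln x \<le> ln 2 / 16 * x / ln x / real a"
    using xa lnx a by (simp add: field_simps divide_right_mono)
  ultimately show ?thesis
    using card_coprime_primes_between_ge[OF n B2 Y2] small
    unfolding B_def[symmetric] Y_def[symmetric] by linarith
qed

lemma eventually_rel_totient_ge_proportion:
  "\<forall>\<^sub>F l in at_top. \<forall>n. 2 \<le> n \<longrightarrow> l \<le> n \<longrightarrow> ln (real n) \<le> real l powr (1/5) \<longrightarrow>
     real (rel_totient n l) \<ge> ln 2 / 48 * (real l / real n) * real (totient n)"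
proof -
  have "\<forall>\<^sub>F l in at_top. real l powr (1/3) \<ge> 3 \<and> real l powr (2/3) \<ge> 4 \<and> ln (real l) \<ge> 1 \<and>
     real l powr (1/3) + real l powr (1/5) / ln (real l powr (1/3) - 1)
       \<le> ln 2 / 16 * real l powr (2/3) / ln (real l)"
    by (intro eventually_conj; real_asymp)
  then show ?thesis
  proof (rule eventually_mono, safe)
    fix l n :: nat
    define B where "B = nat \<lfloor>real l powr (1/3)\<rfloor>"
    define A where "A = {a\<in>{1..B}. coprime a n}"
    assume "real l powr (1/3) \<ge> 3" "real l powr (2/3) \<ge> 4" and lnl: "ln (real l) \<ge> 1"
      and "real l powr (1/3) + real l powr (1/5) / ln (real l powr (1/3) - 1)
             \<le> ln 2 / 16 * real l powr (2/3) / ln (real l)"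
      and n: "2 \<le> n" "l \<le> n" and "ln (real n) \<le> real l powr (1/5)"
    note asms = this
    have B: "real B \<le> real l powr (1/3)"
      unfolding B_def by (intro nat_floor_bounds) simp
    hence small: "real a \<le> real l powr (1/3)" if "a \<in> A" for a
      using that by (auto simp: A_def)
    have "ln 2 / 16 * real l / ln (real l) * (\<Sum>a\<in>A. 1 / real a)
            = (\<Sum>a\<in>A. ln 2 / 16 * real l / ln (real l) / real a)"
      by (simp add: sum_distrib_left)
    also have "\<dots> \<le> (\<Sum>a\<in>A. real (card (coprime_primes_between n B (l div a))))"
      unfolding B_def using asms small
      by (intro sum_mono card_coprime_primes_between_quotient_ge) (auto simp: A_def)
    also have "\<dots> \<le> real (rel_totient n l)"
      using sum_card_coprime_primes_between_le_rel_totient[OF n, of B]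
      unfolding A_def by (metis of_nat_le_iff of_nat_sum)
    finally have sum_le: "ln 2 / 16 * real l / ln (real l) * (\<Sum>a\<in>A. 1 / real a)
                            \<le> real (rel_totient n l)" .
    have "ln (real l) / 3 = ln (real l powr (1/3))"
      using lnl by simp
    also have "\<dots> \<le> ln (real B + 1)"
      using asms unfolding B_def by (subst ln_le_cancel_iff) linarith+
    finally have "real (totient n) / real n * (ln (real l) / 3)
                    \<le> real (totient n) / real n * ln (real B + 1)"
      by (intro mult_left_mono) auto
    also have "\<dots> \<le> (\<Sum>a\<in>A. 1 / real a)"
      using harmonic_coprime_ge[of n B] n unfolding A_def by simp
    finally have "ln 2 / 16 * real l / ln (real l) * (real (totient n) / real n * (ln (real l) / 3))
                    \<le> ln 2 / 16 * real l / ln (real l) * (\<Sum>a\<in>A. 1 / real a)"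
      using lnl by (intro mult_left_mono) auto
    with sum_le have "ln 2 / 16 * real l / ln (real l) * (real (totient n) / real n * (ln (real l) / 3))
                        \<le> real (rel_totient n l)" by linarith
    moreover have "ln 2 / 16 * real l / ln (real l) * (real (totient n) / real n * (ln (real l) / 3))
                     = ln 2 / 48 * (real l / real n) * real (totient n)"
      using lnl by (simp add: field_simps)
    ultimately show "ln 2 / 48 * (real l / real n) * real (totient n) \<le> real (rel_totient n l)"
      by simp
  qed
qed

lemma eventually_rel_totient_ge_prime_count:
  "\<forall>\<^sub>F l in at_top. \<forall>n. 2 \<le> n \<longrightarrow> l \<le> n \<longrightarrow> ln (real n) \<le> ln 2 / 64 * real l \<longrightarrow>
     real (rel_totient n l) \<ge> ln 2 / 8 * (real l / mlog (real l))"
proof -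
  have "\<forall>\<^sub>F l in at_top. sqrt (real l) \<ge> 3 \<and> ln (sqrt (real l) - 1) \<ge> ln (real l) / 4 \<and>
     sqrt (real l) \<le> ln 2 / 16 * real l / ln (real l) \<and> ln (real l) \<ge> 1"
    by (intro eventually_conj; real_asymp)
  then show ?thesis
  proof (rule eventually_mono, safe)
    fix l n :: nat
    define x where "x = real l"
    define B where "B = nat \<lfloor>sqrt x\<rfloor>"
    assume "sqrt (real l) \<ge> 3" "ln (sqrt (real l) - 1) \<ge> ln (real l) / 4"
      "sqrt (real l) \<le> ln 2 / 16 * real l / ln (real l)" "ln (real l) \<ge> 1"
      and n: "2 \<le> n" "l \<le> n" and lnn: "ln (real n) \<le> ln 2 / 64 * real l"
    note asms = this[folded x_def]
    have B: "real B \<le> sqrt x" "sqrt x - 1 \<le> real B"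
      unfolding B_def by (intro nat_floor_bounds; simp add: x_def)+
    hence B2: "B \<ge> 2" using asms by linarith
    have "3 ^ 2 \<le> sqrt x ^ 2" using asms by (intro power_mono) auto
    hence x9: "9 \<le> x" by (simp add: x_def)
    hence l2: "l \<ge> 2" by (simp add: x_def)
    have "ln (sqrt x - 1) \<le> ln B" using asms B x9 by (subst ln_le_cancel_iff) auto
    hence lnB: "ln x / 4 \<le> ln B" using asms by linarith
    have "ln n / ln B \<le> (ln 2 / 64 * x) / (ln x / 4)"
      using lnn lnB asms by (intro frac_le) (auto simp: x_def)
    also have "\<dots> = ln 2 / 16 * x / ln x" by simp
    finally have "real B + ln n / ln B \<le> ln 2 / 16 * x / ln x + ln 2 / 16 * x / ln x"
      using B asms by linarith
    also have "\<dots> = ln 2 / 8 * x / ln x" by simp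
    finally have "real B + ln n / ln B \<le> ln 2 / 8 * x / ln x" .
    hence "ln 2 / 8 * (x / ln x) \<le> real (card (coprime_primes_between n B l))"
      using card_coprime_primes_between_ge[OF _ B2 l2, of n] n by (simp add: x_def)
    also have "\<dots> \<le> real (\<Sum>a\<in>{a\<in>{1..B}. coprime a n}. card (coprime_primes_between n B (l div a)))"
      unfolding of_nat_le_iff using B2 member_le_sum[of 1 "{a\<in>{1..B}. coprime a n}"
          "\<lambda>a. card (coprime_primes_between n B (l div a))"] by simp
    also have "\<dots> \<le> real (rel_totient n l)"
      unfolding of_nat_le_iff by (rule sum_card_coprime_primes_between_le_rel_totient[OF n])
    finally show "ln 2 / 8 * (real l / mlog (real l)) \<le> real (rel_totient n l)"
      using asms by (simp add: x_def mlog_def)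
  qed
qed

lemma rel_totient_ge_proportion:
  "\<exists>c>0. \<forall>n l. 2 \<le> n \<longrightarrow> l \<le> n \<longrightarrow> real l > c * mlog (real n) ^ 5 \<longrightarrow>
     real (rel_totient n l) \<ge> ln 2 / 48 * (real l / real n) * real (totient n)"
proof -
  obtain L :: nat where L: "\<And>l n. L \<le> l \<Longrightarrow> 2 \<le> n \<Longrightarrow> l \<le> n \<Longrightarrow>
      ln (real n) \<le> real l powr (1/5) \<Longrightarrow>
      real (rel_totient n l) \<ge> ln 2 / 48 * (real l / real n) * real (totient n)"
    using eventually_rel_totient_ge_proportion unfolding eventually_at_top_linorder by blast
  show ?thesis
  proof (intro exI[of _ "max 1 (real L)"] conjI allI impI)
    fix n l :: nat
    assume n: "2 \<le> n" "l \<le> n" and big: "max 1 (real L) * mlog (real n) ^ 5 < real l"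
    have M: "1 \<le> mlog (real n)" "1 \<le> mlog (real n) ^ 5"
      using mlog_ge_one[of n] by simp_all
    have "1 * mlog (real n) ^ 5 \<le> max 1 (real L) * mlog (real n) ^ 5"
      using M by (intro mult_right_mono) auto
    moreover have "max 1 (real L) * 1 \<le> max 1 (real L) * mlog (real n) ^ 5"
      using M by (intro mult_left_mono) auto
    ultimately have "mlog (real n) ^ 5 \<le> real l" and "real L < real l" using big by linarith+
    hence "mlog (real n) \<le> real l powr (1 / real 5)" and "L \<le> l"
      using M by (intro power_le_imp_le_powr_inverse, simp_all)
    thus "real (rel_totient n l) \<ge> ln 2 / 48 * (real l / real n) * real (totient n)"
      using L n ln_le_mlog[of n] by force
  qed simp
qed

lemma rel_totient_ge_prime_count:
  "\<exists>c>0. \<forall>n l. 2 \<le> n \<longrightarrow> l \<le> n \<longrightarrow> real l > c * mlog (real n) \<longrightarrow>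
     real (rel_totient n l) \<ge> ln 2 / 8 * (real l / mlog (real l))"
proof -
  obtain L :: nat where L: "\<And>l n. L \<le> l \<Longrightarrow> 2 \<le> n \<Longrightarrow> l \<le> n \<Longrightarrow>
      ln (real n) \<le> ln 2 / 64 * real l \<Longrightarrow>
      real (rel_totient n l) \<ge> ln 2 / 8 * (real l / mlog (real l))"
    using eventually_rel_totient_ge_prime_count unfolding eventually_at_top_linorder by blast
  define c where "c = max (real L) (64 / ln 2)"
  have c: "real L \<le> c" "64 / ln 2 \<le> c" "0 < c"
    by (auto simp: c_def less_max_iff_disj)
  show ?thesis
  proof (intro exI[of _ c] conjI allI impI)
    fix n l :: nat
    assume n: "2 \<le> n" "l \<le> n" and big: "c * mlog (real n) < real l"
    have M: "1 \<le> mlog (real n)" by (rule mlog_ge_one)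
    have "64 / ln 2 * mlog (real n) \<le> c * mlog (real n)"
      using c M by (intro mult_right_mono) auto
    hence "ln 2 / 64 * (64 / ln 2 * mlog (real n)) \<le> ln 2 / 64 * real l"
      using big by (intro mult_left_mono) auto
    hence "ln (real n) \<le> ln 2 / 64 * real l" using ln_le_mlog[of n] by simp
    moreover have "c * 1 \<le> c * mlog (real n)"
      using c M by (intro mult_left_mono) auto
    hence "real L < real l" using big c by linarith
    hence "L \<le> l" by simp
    ultimately show "real (rel_totient n l) \<ge> ln 2 / 8 * (real l / mlog (real l))"
      using L n by blast
  qed (fact c)
qed

theorem mainTheorem3:
  shows "\<exists>c::real. \<exists>\<kappa>::real. c > 0 \<and> \<kappa> > 0 \<and>
    (\<forall>n l :: nat. 2 \<le> n \<longrightarrow> 1 \<le> l \<longrightarrow> l \<le> n \<longrightarrow>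
      (real l > c * mlog (real n) ^ 5 \<longrightarrow>
         real (rel_totient n l) \<ge> \<kappa> * (real l / real n) * real (totient n)) \<and>
      (real l > c * mlog (real n) \<longrightarrow>
         real (rel_totient n l) \<ge> \<kappa> * (real l / mlog (real l))))"
proof -
  obtain c\<^sub>1 c\<^sub>2 where "c\<^sub>1 > 0" "c\<^sub>2 > 0"
    and i: "\<And>n l. 2 \<le> n \<Longrightarrow> l \<le> n \<Longrightarrow> real l > c\<^sub>1 * mlog (real n) ^ 5 \<Longrightarrow>
              real (rel_totient n l) \<ge> ln 2 / 48 * (real l / real n) * real (totient n)"
    and ii: "\<And>n l. 2 \<le> n \<Longrightarrow> l \<le> n \<Longrightarrow> real l > c\<^sub>2 * mlog (real n) \<Longrightarrow>
              real (rel_totient n l) \<ge> ln 2 / 8 * (real l / mlog (real l))"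
    using rel_totient_ge_proportion rel_totient_ge_prime_count by blast
  show ?thesis
  proof (rule exI[of _ "max c\<^sub>1 c\<^sub>2"], rule exI[of _ "ln 2 / 48"], intro conjI allI impI)
    fix n l :: nat
    assume n: "2 \<le> n" "1 \<le> l" "l \<le> n"
    have M: "0 \<le> mlog (real n)" "0 \<le> mlog (real n) ^ 5" using mlog_ge_one[of n] by auto
    { assume "max c\<^sub>1 c\<^sub>2 * mlog (real n) ^ 5 < real l"
      moreover have "c\<^sub>1 * mlog (real n) ^ 5 \<le> max c\<^sub>1 c\<^sub>2 * mlog (real n) ^ 5"
        using M by (intro mult_right_mono) auto
      ultimately show "ln 2 / 48 * (real l / real n) * real (totient n) \<le> real (rel_totient n l)"
        using i[OF n(1,3)] by linarith }
    { assume "max c\<^sub>1 c\<^sub>2 * mlog (real n) < real l"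
      moreover have "c\<^sub>2 * mlog (real n) \<le> max c\<^sub>1 c\<^sub>2 * mlog (real n)"
        using M by (intro mult_right_mono) auto
      moreover have "ln 2 / 48 * (real l / mlog (real l)) \<le> ln 2 / 8 * (real l / mlog (real l))"
        using mlog_ge_one[of l] by (intro mult_right_mono) auto
      ultimately show "ln 2 / 48 * (real l / mlog (real l)) \<le> real (rel_totient n l)"
        using ii[OF n(1,3)] by linarith }
  qed (use \<open>c\<^sub>1 > 0\<close> in auto)
qed
end
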